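(* (Progress for $\lambda_{\mathrm{act}}$ terms.) Assume $\Gamma$ is either empty or only contains entries of the form $a_i : \mathsf{ActorRef}(A_i)$ (for names $a_i$). If $\Gamma \mid B \vdash M : A$, then either: (1) $M = \mathbf{return}\ V$ for some value $V$; or (2) $M$ can be written as $E[M']$ for an evaluation context $E$, where $M'$ is a communication or concurrency primitive, i.e. of the form $\mathbf{spawn}\ N$, $\mathbf{send}\ V\ W$, $\mathbf{receive}$, or $\mathbf{self}$; or (3) there exists some $M'$ such that $M \longrightarrow_{\mathsf{M}} M'$.
   Context: The calculus $\lambda_{\mathrm{act}}$. Types: $A,B,C ::= \mathbf{1} \mid A \xrightarrow{C} B \mid \mathsf{ActorRef}(A)$. $\alpha$ ranges over variables $x$ and names $a$. Values $V,W ::= \alpha \mid \lambda x.M \mid ()$. Computations $M,N ::= V\,W \mid \mathbf{let}\ x \Leftarrow M\ \mathbf{in}\ N \mid \mathbf{return}\ V \mid \mathbf{spawn}\ M \mid \mathbf{send}\ V\ W \mid \mathbf{receive} \mid \mathbf{self}$. Value typing $\Gamma\vdash V:A$: $\Gamma\vdash\alpha:A$ if $\alpha:A\in\Gamma$; $\Gamma\vdash\lambda x.M : A\xrightarrow{C}B$ if $\Gamma,x:A\mid C\vdash M:B$; $\Gamma\vdash():\mathbf 1$. Computation typing $\Gamma\mid C\vdash M:A$ ($C$ is the mailbox type): $\Gamma\mid C\vdash V\,W:B$ if $\Gamma\vdash V:A\xrightarrow{C}B$ and $\Gamma\vdash W:A$; $\Gamma\mid C\vdash\mathbf{let}\ x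 \Leftarrow M\ \mathbf{in}\ N : B$ if $\Gamma\mid C\vdash M:A$ and $\Gamma,x:A\mid C\vdash N:B$; $\Gamma\mid C\vdash \mathbf{return}\ V:A$ if $\Gamma\vdash V:A$; $\Gamma\mid C\vdash\mathbf{send}\ V\ W:\mathbf 1$ if $\Gamma\vdash V:A$ and $\Gamma\vdash W:\mathsf{ActorRef}(A)$; $\Gamma\mid A\vdash\mathbf{receive}:A$; $\Gamma\mid C\vdash\mathbf{spawn}\ M:\mathsf{ActorRef}(A)$ if $\Gamma\mid A\vdash M:\mathbf 1$; $\Gamma\mid A\vdash\mathbf{self}:\mathsf{ActorRef}(A)$. Evaluation contexts $E ::= [\,] \mid \mathbf{let}\ x \Leftarrow E\ \mathbf{in}\ M$. Term reduction $\longrightarrow_{\mathsf{M}}$: $(\lambda x.M)V\longrightarrow_{\mathsf{M}} M\{V/x\}$; $\mathbf{let}\ x \Leftarrow \mathbf{return}\ V\ \mathbf{in}\ M \longrightarrow_{\mathsf{M}} M\{V/x\}$; $E[M]\longrightarrow_{\mathsf{M}} E[M']$ if $M\longrightarrow_{\mathsf{M}} M'$. *)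

theory Defs
  imports Main
begin

type_synonym var = string
type_synonym name = nat

datatype ty = Unit | Fun ty ty ty | ActorRef ty
  (* Fun A C B  stands for  A -C-> B *)

datatype atom = Var var | Nm name

datatype val = VAtom atom | Lam var comp | UnitV
and comp = App val val | Let var comp comp | Return val | Spawn comp
         | Send val val | Receive | Self

type_synonym env = "atom \<Rightarrow> ty option"

inductive vtyping :: "env \<Rightarrow> val \<Rightarrow> ty \<Rightarrow> bool"
  and ctyping :: "env \<Rightarrow> ty \<Rightarrow> comp \<Rightarrow> ty \<Rightarrow> bool" where
  T_Atom: "\<Gamma> \<alpha> = Some A \<Longrightarrow> vtyping \<Gamma> (VAtom \<alpha>) A"
| T_Lam: "ctyping (\<Gamma>(Var x \<mapsto> A)) C M B \<Longrightarrow> vtyping \<Gamma> (Lam x M) (Fun A C B)"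
| T_Unit: "vtyping \<Gamma> UnitV Unit"
| T_App: "vtyping \<Gamma> V (Fun A C B) \<Longrightarrow> vtyping \<Gamma> W A \<Longrightarrow> ctyping \<Gamma> C (App V W) B"
| T_Let: "ctyping \<Gamma> C M A \<Longrightarrow> ctyping (\<Gamma>(Var x \<mapsto> A)) C N B \<Longrightarrow> ctyping \<Gamma> C (Let x M N) B"
| T_Return: "vtyping \<Gamma> V A \<Longrightarrow> ctyping \<Gamma> C (Return V) A"
| T_Send: "vtyping \<Gamma> V A \<Longrightarrow> vtyping \<Gamma> W (ActorRef A) \<Longrightarrow> ctyping \<Gamma> C (Send V W) Unit"
| T_Receive: "ctyping \<Gamma> A Receive A"
| T_Spawn: "ctyping \<Gamma> A M Unit \<Longrightarrow> ctyping \<Gamma> C (Spawn M) (ActorRef A)"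
| T_Self: "ctyping \<Gamma> A Self (ActorRef A)"

fun vsubst :: "val \<Rightarrow> var \<Rightarrow> val \<Rightarrow> val"
  and csubst :: "comp \<Rightarrow> var \<Rightarrow> val \<Rightarrow> comp" where
  "vsubst (VAtom (Var y)) x V = (if y = x then V else VAtom (Var y))"
| "vsubst (VAtom (Nm a)) x V = VAtom (Nm a)"
| "vsubst (Lam y M) x V = (if y = x then Lam y M else Lam y (csubst M x V))"
| "vsubst UnitV x V = UnitV"
| "csubst (App W1 W2) x V = App (vsubst W1 x V) (vsubst W2 x V)"
| "csubst (Let y M N) x V = Let y (csubst M x V) (if y = x then N else csubst N x V)"
| "csubst (Return W) x V = Return (vsubst W x V)"
| "csubst (Spawn M) x V = Spawn (csubst M x V)"
| "csubst (Send W1 W2) x V = Send (vsubst W1 x V) (vsubst W2 x V)"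
| "csubst Receive x V = Receive"
| "csubst Self x V = Self"

datatype ectx = Hole | ELet var ectx comp

fun plug :: "ectx \<Rightarrow> comp \<Rightarrow> comp" where
  "plug Hole M = M"
| "plug (ELet x E N) M = Let x (plug E M) N"

inductive mred :: "comp \<Rightarrow> comp \<Rightarrow> bool" where
  R_Beta: "mred (App (Lam x M) V) (csubst M x V)"
| R_Let: "mred (Let x (Return V) M) (csubst M x V)"
| R_Ctx: "mred M M' \<Longrightarrow> mred (plug E M) (plug E M')"

definition comm_prim :: "comp \<Rightarrow> bool" where
  "comm_prim M \<longleftrightarrow> (\<exists>N. M = Spawn N) \<or> (\<exists>V W. M = Send V W) \<or> M = Receive \<or> M = Self"

end

theory Submission
  imports Defs
begin

text \<open>Since the environment binds only names of actor type,
  a value of function type must be a \<open>\<lambda>\<close>-abstraction, so an application always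
  \<open>\<beta>\<close>-reduces; a \<open>let\<close> inherits the trichotomy from its head computation, which is
  exactly the position of the hole of an evaluation context.\<close>

definition actor_env :: "env \<Rightarrow> bool" where
  "actor_env \<Gamma> \<longleftrightarrow> (\<forall>\<alpha> T. \<Gamma> \<alpha> = Some T \<longrightarrow> (\<exists>a A. \<alpha> = Nm a \<and> T = ActorRef A))"

definition progresses :: "comp \<Rightarrow> bool" where
  "progresses M \<longleftrightarrow> (\<exists>V. M = Return V)
       \<or> (\<exists>E M'. M = plug E M' \<and> comm_prim M')
       \<or> (\<exists>M'. mred M M')"

lemma canonical_fun_val:
  assumes "actor_env \<Gamma>" and "vtyping \<Gamma> V (Fun A C B)"
  shows "\<exists>x M. V = Lam x M"
  using assms(2) by cases (use assms(1) in \<open>auto simp: actor_env_def\<close>)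

lemma comm_prim_progresses: "comm_prim M \<Longrightarrow> progresses M"
  unfolding progresses_def by (metis plug.simps(1))

lemma progresses_Let:
  assumes "progresses M"
  shows "progresses (Let x M N)"
proof -
  from assms consider (ret) V where "M = Return V"
    | (prim) E M' where "M = plug E M'" and "comm_prim M'"
    | (step) M' where "mred M M'"
    unfolding progresses_def by blast
  then show ?thesis
  proof cases
    case ret
    then show ?thesis unfolding progresses_def using R_Let by blast
  next
    case prim
    then have "Let x M N = plug (ELet x E N) M'" by simp
    with \<open>comm_prim M'\<close> show ?thesis unfolding progresses_def by blast
  next
    case step
    from R_Ctx[OF this, of "ELet x Hole N"] show ?thesis unfolding progresses_def by auto
  qed
qed

lemma ctyping_progresses:
  assumes "ctyping \<Gamma> B M A" and "actor_env \<Gamma>"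
  shows "progresses M"
  using assms
proof (induction M arbitrary: A rule: comp.induct[of "\<lambda>_. True"])
  case (App V W)
  then obtain A' where "vtyping \<Gamma> V (Fun A' B A)" by (auto elim: ctyping.cases)
  with canonical_fun_val[OF \<open>actor_env \<Gamma>\<close>] obtain x N where "V = Lam x N" by blast
  then show ?case using R_Beta unfolding progresses_def by blast
next
  case (Let x M N)
  then obtain A' where "ctyping \<Gamma> B M A'" by (auto elim: ctyping.cases)
  with Let.IH(1) Let.prems(2) show ?case by (blast intro: progresses_Let)
qed (simp add: progresses_def; fail | rule comm_prim_progresses, simp add: comm_prim_def)+

theorem lemma10:
  assumes "\<forall>\<alpha> T. \<Gamma> \<alpha> = Some T \<longrightarrow> (\<exists>a A. \<alpha> = Nm a \<and> T = ActorRef A)"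
    and "ctyping \<Gamma> B M A"
  shows "(\<exists>V. M = Return V)
       \<or> (\<exists>E M'. M = plug E M' \<and> comm_prim M')
       \<or> (\<exists>M'. mred M M')"
proof -
  have "actor_env \<Gamma>" using assms(1) unfolding actor_env_def .
  with assms(2) have "progresses M" by (rule ctyping_progresses)
  then show ?thesis unfolding progresses_def .
qed

end
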